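(* Let $I_n$ denote the number of inversion sequences of length $n$ avoiding all of the patterns $100,110,120,201,210$ (with $I_0=1$). Let $X=X(z)=1+2z+5z^2+17z^3+\cdots$ be the unique formal power series in $z$ satisfying $1-X+z-zX+2zX^2-z^2X^3=0$. Then $$\sum_{n\ge0}I_nz^n=\frac{(1+z)(X-1)-z(1-z)X^2}{z(1+z)X}.$$
   Context: An inversion sequence of length $n$ is an integer sequence $(a_1,\dots,a_n)$ with $0\le a_i<i$ for all $i$. A pattern is a sequence $\sigma$ of non-negative integers containing every value from $0$ to $\max(\sigma)$; the reduction of a sequence replaces its smallest values by $0$, the next smallest by $1$, etc. A sequence $a$ contains $\sigma$ if some (not necessarily consecutive) subsequence of $a$ has reduction $\sigma$; otherwise $a$ avoids $\sigma$. Equivalently, these are the inversion sequences with no $i<j<k$ such that $a_i>a_k$. *)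

theory Defs
  imports Main "HOL-Library.Sublist" "HOL-Computational_Algebra.Formal_Power_Series"
begin

text \<open>Inversion sequence of length n, stored 0-indexed: entry a!i (the paper's a_{i+1})
  satisfies 0 \<le> a!i < i+1.\<close>
definition inv_seq :: "nat \<Rightarrow> nat list \<Rightarrow> bool" where
  "inv_seq n a \<longleftrightarrow> length a = n \<and> (\<forall>i<n. a ! i < Suc i)"

definition reduction :: "nat list \<Rightarrow> nat list" where
  "reduction xs = map (\<lambda>x. card {y \<in> set xs. y < x}) xs"

definition contains_pattern :: "nat list \<Rightarrow> nat list \<Rightarrow> bool" where
  "contains_pattern a \<sigma> \<longleftrightarrow> (\<exists>s. subseq s a \<and> reduction s = \<sigma>)"

definition avoids :: "nat list \<Rightarrow> nat list \<Rightarrow> bool" where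
  "avoids a \<sigma> \<longleftrightarrow> \<not> contains_pattern a \<sigma>"

definition I_count :: "nat \<Rightarrow> nat" where
  "I_count n = card {a. inv_seq n a \<and>
     (\<forall>\<sigma>\<in>{[1,0,0],[1,1,0],[1,2,0],[2,0,1],[2,1,0]}. avoids a \<sigma>)}"

definition X_eq :: "rat fps \<Rightarrow> bool" where
  "X_eq X \<longleftrightarrow> 1 - X + fps_X - fps_X * X + 2 * fps_X * X^2 - fps_X^2 * X^3 = 0"

end

(*
  An inversion sequence avoids 100, 110, 120, 201 and 210 iff it has no entries a_i > a_k
  with i < j < k, so a prefix p extends by c iff c bounds every entry of p except the last.
  Hence the number of avoiders of length n with maximum M before the last entry and last
  entry b obeys a linear recurrence in n.  With C = zX, W = 1/(1 - C) and
  A = (1 - C)/(1 - C - z), these numbers are single coefficients of A C^k and z A W C^k: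
  the recurrence reduces to the telescoping of W = 1 + W C and, once, to the cubic for X in
  the form C = z W + z^2 W^2.  Summing gives I_n = [z^n] A, and A is the stated expression
  in X.  That X exists and is unique is Banach's fixed point theorem for the z-adic metric.
*)
theory Submission
  imports Defs "HOL-Analysis.Elementary_Metric_Spaces"
begin

unbundle fps_syntax

definition no_gapped_descent :: "nat list \<Rightarrow> bool" where
  "no_gapped_descent a \<longleftrightarrow> \<not> (\<exists>x y w. subseq [x, y, w] a \<and> w < x)"

lemma reduction_eq_map_card_filter:
  "reduction xs = map (\<lambda>x. card (set (filter (\<lambda>y. y < x) xs))) xs"
  unfolding reduction_def set_filter ..

lemma reduction_in_patterns_if_descent:
  fixes x y w :: nat
  assumes "w < x"
  shows "reduction [x, y, w] \<in> {[1,0,0], [1,1,0], [1,2,0], [2,0,1], [2,1,0]}"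
  using assms
  by (cases y w rule: linorder_cases; cases y x rule: linorder_cases)
     (simp_all add: reduction_eq_map_card_filter)

lemma descent_if_reduction_in_patterns:
  assumes "reduction s \<in> {[1,0,0], [1,1,0], [1,2,0], [2,0,1], [2,1,0]}"
  shows "\<exists>x y w. s = [x, y, w] \<and> w < x"
proof -
  have "length s = 3"
    using assms unfolding reduction_def by (auto dest: arg_cong[where f = length])
  then obtain x y w where s: "s = [x, y, w]"
    by (auto simp: numeral_3_eq_3 length_Suc_conv)
  have "w < x"
    using assms unfolding s
    by (cases y w rule: linorder_cases; cases y x rule: linorder_cases;
        cases w x rule: linorder_cases)
       (simp_all add: reduction_eq_map_card_filter)
  with s show ?thesis by blast
qed

lemma avoids_patterns_iff_no_gapped_descent:
  "(\<forall>\<sigma>\<in>{[1,0,0], [1,1,0], [1,2,0], [2,0,1], [2,1,0]}. avoids a \<sigma>) \<longleftrightarrow> no_gapped_descent a"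
  unfolding avoids_def contains_pattern_def no_gapped_descent_def
  using reduction_in_patterns_if_descent descent_if_reduction_in_patterns by blast

lemma subseq_snoc_iff:
  "subseq xs (ys @ [c]) \<longleftrightarrow> subseq xs ys \<or> (\<exists>xs'. xs = xs' @ [c] \<and> subseq xs' ys)"
proof
  assume "subseq xs (ys @ [c])"
  then obtain xs1 xs2 where xs: "xs = xs1 @ xs2" "subseq xs1 ys" "subseq xs2 [c]"
    by (auto simp: subseq_append_iff)
  have "xs2 = [] \<or> xs2 = [c]"
    using xs(3) by (cases xs2) (auto split: if_splits)
  with xs show "subseq xs ys \<or> (\<exists>xs'. xs = xs' @ [c] \<and> subseq xs' ys)" by auto
next
  assume "subseq xs ys \<or> (\<exists>xs'. xs = xs' @ [c] \<and> subseq xs' ys)"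
  then show "subseq xs (ys @ [c])"
    by (auto intro: subseq_rev_drop_many list_emb_append_mono)
qed

lemma ex_subseq_pair_iff: "(\<exists>y. subseq [x, y] p) \<longleftrightarrow> x \<in> set (butlast p)"
proof (induction p rule: rev_induct)
  case (snoc d p)
  have "(\<exists>y. subseq [x, y] (p @ [d])) \<longleftrightarrow> (\<exists>y. subseq [x, y] p) \<or> subseq [x] p"
    by (auto simp: subseq_snoc_iff)
  also have "\<dots> \<longleftrightarrow> x \<in> set p"
    using snoc.IH subseq_singleton_left[of x p] by (auto dest: in_set_butlastD)
  finally show ?case by simp
qed simp

lemma no_gapped_descent_snoc_iff:
  "no_gapped_descent (p @ [c]) \<longleftrightarrow> no_gapped_descent p \<and> (\<forall>x\<in>set (butlast p). x \<le> c)"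
proof -
  have "no_gapped_descent (p @ [c]) \<longleftrightarrow> no_gapped_descent p \<and> \<not> (\<exists>x y. subseq [x, y] p \<and> c < x)"
    unfolding no_gapped_descent_def subseq_snoc_iff
    by (auto simp: append_eq_Cons_conv Cons_eq_append_conv)
  then show ?thesis
    using ex_subseq_pair_iff by (metis not_le)
qed

definition max_entry :: "nat list \<Rightarrow> nat" where
  "max_entry xs = Max (set (0 # xs))"

lemma max_entry_snoc: "max_entry (xs @ [c]) = max (max_entry xs) c"
  unfolding max_entry_def by (cases "xs = []") (auto simp: max.left_commute max.commute)

lemma max_entry_butlast_last:
  "xs \<noteq> [] \<Longrightarrow> max_entry xs = max (max_entry (butlast xs)) (last xs)"
  by (metis append_butlast_last_id max_entry_snoc)

lemma max_entry_le_iff: "max_entry xs \<le> c \<longleftrightarrow> (\<forall>x\<in>set xs. x \<le> c)"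
  unfolding max_entry_def by simp

lemma inv_seq_snoc_iff: "inv_seq (Suc n) (p @ [c]) \<longleftrightarrow> inv_seq n p \<and> c \<le> n"
  unfolding inv_seq_def by (auto simp: All_less_Suc nth_append)

definition avoiders :: "nat \<Rightarrow> nat list set" where
  "avoiders n = {a. inv_seq n a \<and> no_gapped_descent a}"

lemma I_count_eq_card_avoiders: "I_count n = card (avoiders n)"
  unfolding I_count_def avoiders_def avoids_patterns_iff_no_gapped_descent ..

lemma length_avoiders: "a \<in> avoiders n \<Longrightarrow> length a = n"
  unfolding avoiders_def inv_seq_def by simp

lemma entry_less_if_avoiders: "a \<in> avoiders n \<Longrightarrow> x \<in> set a \<Longrightarrow> x < n"
  unfolding avoiders_def inv_seq_def in_set_conv_nth by auto

lemma finite_avoiders: "finite (avoiders n)"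
proof (rule finite_subset)
  show "avoiders n \<subseteq> {xs. set xs \<subseteq> {..<n} \<and> length xs = n}"
    using entry_less_if_avoiders length_avoiders by blast
qed (simp add: finite_lists_length_eq)

lemma snoc_in_avoiders_iff:
  "p @ [c] \<in> avoiders (Suc n) \<longleftrightarrow> p \<in> avoiders n \<and> c \<le> n \<and> max_entry (butlast p) \<le> c"
  unfolding avoiders_def
  by (auto simp: inv_seq_snoc_iff no_gapped_descent_snoc_iff max_entry_le_iff)

lemma avoiders_Suc_snoc: "a \<in> avoiders (Suc n) \<Longrightarrow> a = butlast a @ [last a]"
  using length_avoiders by (metis Zero_not_Suc append_butlast_last_id list.size(3))

lemma avoiders_zero: "avoiders 0 = {[]}"
  unfolding avoiders_def inv_seq_def no_gapped_descent_def by auto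

lemma avoiders_one: "avoiders 1 = {[0]}"
  unfolding avoiders_def inv_seq_def no_gapped_descent_def
  by (auto simp: length_Suc_conv)

definition refined_avoiders :: "nat \<Rightarrow> nat \<Rightarrow> nat \<Rightarrow> nat list set" where
  "refined_avoiders n M b = {a \<in> avoiders n. max_entry (butlast a) = M \<and> last a = b}"

definition refined_count :: "nat \<Rightarrow> nat \<Rightarrow> nat \<Rightarrow> nat" where
  "refined_count n M b = card (refined_avoiders n M b)"

lemma snoc_in_refined_avoiders_Suc_iff:
  assumes "n \<ge> 1"
  shows "p @ [c] \<in> refined_avoiders (Suc n) M c \<longleftrightarrow> c \<le> n \<and>
    ((\<exists>b\<le>M. M \<le> c \<and> p \<in> refined_avoiders n M b) \<or>
     (\<exists>M0<M. M0 \<le> c \<and> p \<in> refined_avoiders n M0 M))"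
proof -
  have "max_entry p = max (max_entry (butlast p)) (last p)" if "p \<in> avoiders n"
  proof (rule max_entry_butlast_last)
    show "p \<noteq> []" using that assms length_avoiders by fastforce
  qed
  then have "p @ [c] \<in> refined_avoiders (Suc n) M c \<longleftrightarrow> c \<le> n \<and> p \<in> avoiders n \<and>
      max_entry (butlast p) \<le> c \<and> max (max_entry (butlast p)) (last p) = M"
    by (auto simp: refined_avoiders_def snoc_in_avoiders_iff)
  then show ?thesis
    unfolding refined_avoiders_def by (simp add: max_def) linarith
qed

lemma refined_avoiders_Suc_snoc:
  "a \<in> refined_avoiders (Suc n) M c \<Longrightarrow> a = butlast a @ [c]"
  using avoiders_Suc_snoc unfolding refined_avoiders_def by auto

lemma refined_avoiders_Suc:
  assumes "n \<ge> 1" "c \<le> n"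
  shows "refined_avoiders (Suc n) M c = (\<lambda>p. p @ [c]) `
    ((if M \<le> c then \<Union>b\<in>{..M}. refined_avoiders n M b else {}) \<union>
     (\<Union>M0\<in>{..<min M (Suc c)}. refined_avoiders n M0 M))" (is "_ = _ ` ?U")
proof -
  have U: "p \<in> ?U \<longleftrightarrow> p @ [c] \<in> refined_avoiders (Suc n) M c" for p
    unfolding snoc_in_refined_avoiders_Suc_iff[OF assms(1)] using assms(2)
    by (auto split: if_splits) (metis le_less_trans less_Suc_eq_le not_le)
  show ?thesis
  proof (intro set_eqI iffI)
    fix a
    assume "a \<in> refined_avoiders (Suc n) M c"
    then show "a \<in> (\<lambda>p. p @ [c]) ` ?U"
      using refined_avoiders_Suc_snoc U by (metis image_eqI)
  qed (use U in blast)
qed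

text \<open>Appending \<open>c\<close> to an avoider in class \<open>(M0, b)\<close> gives class \<open>(max M0 b, c)\<close>, and is
  allowed iff \<open>M0 \<le> c\<close>; the two summands are the cases \<open>b \<le> M0 = M\<close> and \<open>M0 < b = M\<close>.\<close>
definition append_step :: "(nat \<Rightarrow> nat \<Rightarrow> 'a::comm_monoid_add) \<Rightarrow> nat \<Rightarrow> nat \<Rightarrow> nat \<Rightarrow> 'a" where
  "append_step f n M c = (if c \<le> n then
     (if M \<le> c then \<Sum>b\<le>M. f M b else 0) + (\<Sum>M0<min M (Suc c). f M0 M) else 0)"

lemma of_nat_append_step:
  "of_nat (append_step f n M c) = append_step (\<lambda>M b. of_nat (f M b)) n M c"
  by (simp add: append_step_def)

lemma refined_count_Suc:
  assumes "n \<ge> 1"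
  shows "refined_count (Suc n) M c = append_step (refined_count n) n M c"
proof (cases "c \<le> n")
  case False
  have "refined_avoiders (Suc n) M c = {}"
  proof (intro equals0I)
    fix a
    assume "a \<in> refined_avoiders (Suc n) M c"
    then have "butlast a @ [c] \<in> refined_avoiders (Suc n) M c"
      using refined_avoiders_Suc_snoc by metis
    with False show False
      using snoc_in_refined_avoiders_Suc_iff[OF assms] by blast
  qed
  with False show ?thesis
    unfolding refined_count_def append_step_def by simp
next
  case True
  let ?A = "if M \<le> c then \<Union>b\<in>{..M}. refined_avoiders n M b else {}"
  let ?B = "\<Union>M0\<in>{..<min M (Suc c)}. refined_avoiders n M0 M"
  have "refined_count (Suc n) M c = card (?A \<union> ?B)"
    unfolding refined_count_def refined_avoiders_Suc[OF assms True]
    by (rule card_image) (simp add: inj_on_def)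
  also have "\<dots> = card ?A + card ?B"
    by (rule card_Un_disjoint)
       (auto simp: finite_avoiders refined_avoiders_def split: if_splits)
  also have "card ?A = (if M \<le> c then \<Sum>b\<le>M. refined_count n M b else 0)"
    unfolding refined_count_def
    by (simp, intro impI card_UN_disjoint) (auto simp: finite_avoiders refined_avoiders_def)
  also have "card ?B = (\<Sum>M0<min M (Suc c). refined_count n M0 M)"
    unfolding refined_count_def
    by (rule card_UN_disjoint) (auto simp: finite_avoiders refined_avoiders_def)
  finally show ?thesis
    using True unfolding append_step_def by simp
qed

lemma refined_count_one: "refined_count 1 M b = (if M = 0 \<and> b = 0 then 1 else 0)"
proof -
  have "refined_avoiders 1 M b = (if M = 0 \<and> b = 0 then {[0]} else {})"
    unfolding refined_avoiders_def avoiders_one by (auto simp: max_entry_def)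
  then show ?thesis
    unfolding refined_count_def by simp
qed

text \<open>Every avoider of length \<open>n\<close> can be extended by the largest admissible entry \<open>n\<close>.\<close>
lemma card_avoiders_eq_sum_refined_count:
  assumes "n \<ge> 1"
  shows "card (avoiders n) = (\<Sum>M<n. refined_count (Suc n) M n)"
proof -
  have "(\<lambda>p. p @ [n]) ` avoiders n = (\<Union>M<n. refined_avoiders (Suc n) M n)"
  proof (intro set_eqI iffI)
    fix a
    assume "a \<in> (\<lambda>p. p @ [n]) ` avoiders n"
    then obtain p where p: "p \<in> avoiders n" "a = p @ [n]"
      by blast
    have "\<forall>x\<in>set p. x < n"
      using p(1) entry_less_if_avoiders by blast
    then have "max_entry p \<le> n - 1" "max_entry (butlast p) \<le> n"
      unfolding max_entry_le_iff by (auto dest!: in_set_butlastD)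
    with p assms show "a \<in> (\<Union>M<n. refined_avoiders (Suc n) M n)"
      by (auto simp: refined_avoiders_def snoc_in_avoiders_iff)
  next
    fix a
    assume "a \<in> (\<Union>M<n. refined_avoiders (Suc n) M n)"
    then obtain M where a: "a \<in> refined_avoiders (Suc n) M n"
      by blast
    then have "a = butlast a @ [n]"
      by (rule refined_avoiders_Suc_snoc)
    moreover have "butlast a \<in> avoiders n"
      using a calculation snoc_in_avoiders_iff unfolding refined_avoiders_def
      by (metis (no_types, lifting) mem_Collect_eq)
    ultimately show "a \<in> (\<lambda>p. p @ [n]) ` avoiders n"
      by blast
  qed
  then have "card (avoiders n) = card (\<Union>M<n. refined_avoiders (Suc n) M n)"
    using card_image[of "\<lambda>p. p @ [n]" "avoiders n"] by (simp add: inj_on_def)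
  also have "\<dots> = (\<Sum>M<n. refined_count (Suc n) M n)"
    unfolding refined_count_def
    by (rule card_UN_disjoint) (auto simp: finite_avoiders refined_avoiders_def)
  finally show ?thesis .
qed

lemma fps_inverse_one_minus_eq:
  fixes C :: "'a::field fps"
  assumes "C $ 0 = 0"
  shows "inverse (1 - C) = 1 + inverse (1 - C) * C"
proof -
  have "inverse (1 - C) * (1 - C) = 1"
    using assms by (intro inverse_mult_eq_1) simp
  then show ?thesis
    by (simp add: algebra_simps)
qed

lemma fps_mult_power_nth_eq_0:
  fixes g C :: "'a::field fps"
  assumes "C $ 0 = 0" "n < m"
  shows "(g * C ^ m) $ n = 0"
proof (cases "g = 0 \<or> C = 0")
  case False
  then have "subdegree C \<noteq> 0"
    using assms(1) subdegree_eq_0_iff by blast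
  then have "m \<le> subdegree (g * C ^ m)"
    using False by (simp add: trans_le_add2)
  with assms(2) show ?thesis
    by (intro nth_less_subdegree_zero) simp
qed (use assms(2) in \<open>auto simp: power_0_left\<close>)

text \<open>Expand \<open>inverse (1 - C) = (\<Sum>k. C ^ k)\<close>: the powers beyond \<open>C ^ N\<close> do not reach
  degree \<open>N\<close>, leaving a truncated geometric sum.\<close>
lemma fps_sum_mult_power_nth:
  fixes f C :: "'a::field fps"
  assumes "C $ 0 = 0" "K \<le> Suc N"
  shows "(\<Sum>i<K. (f * C ^ (N - i)) $ N) = (f * inverse (1 - C) * C ^ (Suc N - K)) $ N"
  using assms(2)
proof (induction K)
  case 0
  show ?case
    using fps_mult_power_nth_eq_0[OF assms(1), of N "Suc N"] by simp
next
  case (Suc K)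
  let ?W = "inverse (1 - C)"
  have "f * ?W * C ^ (N - K) = f * (1 + ?W * C) * C ^ (N - K)"
    using fps_inverse_one_minus_eq[OF assms(1)] by simp
  also have "\<dots> = f * ?W * C ^ Suc (N - K) + f * C ^ (N - K)"
    by (simp add: algebra_simps)
  finally show ?case
    using Suc by (simp add: Suc_diff_le)
qed

text \<open>With \<open>dist f g = 2 powr - subdegree (f - g)\<close>, the hypothesis makes \<open>\<Phi>\<close> a
  \<open>1/2\<close>-contraction.\<close>
lemma fps_contraction_ex1_fixpoint:
  fixes \<Phi> :: "'a::field fps \<Rightarrow> 'a fps"
  assumes "\<And>f g. \<exists>q. \<Phi> f - \<Phi> g = fps_X * (f - g) * q"
  shows "\<exists>!f. \<Phi> f = f"
proof (rule banach_fix_type[of "1/2"])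
  show "\<forall>f g. dist (\<Phi> f) (\<Phi> g) \<le> 1/2 * dist f g"
  proof (intro allI)
    fix f g
    obtain q where q: "\<Phi> f - \<Phi> g = fps_X * (f - g) * q"
      using assms by blast
    show "dist (\<Phi> f) (\<Phi> g) \<le> 1/2 * dist f g"
    proof (cases "f = g \<or> q = 0")
      case True
      then have "\<Phi> f = \<Phi> g"
        using q by auto
      then show ?thesis
        by simp
    next
      case False
      then have "Suc (subdegree (f - g)) \<le> subdegree (\<Phi> f - \<Phi> g)"
        unfolding q by simp
      then have "inverse (2 ^ subdegree (\<Phi> f - \<Phi> g))
          \<le> (inverse (2 ^ Suc (subdegree (f - g))) :: real)"
        by (intro le_imp_inverse_le power_increasing) auto
      then show ?thesis
        using False q by (auto simp: dist_fps_def)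
    qed
  qed
qed simp_all

lemma X_eq_iff_fixpoint:
  "X_eq X \<longleftrightarrow> 1 + fps_X * (1 - X + 2 * X^2 - fps_X * X^3) = X"
proof -
  have "1 - X + fps_X - fps_X * X + 2 * fps_X * X^2 - fps_X^2 * X^3
      = (1 + fps_X * (1 - X + 2 * X^2 - fps_X * X^3)) - X"
    by (simp add: algebra_simps power2_eq_square)
  then show ?thesis
    unfolding X_eq_def by (simp only: right_minus_eq)
qed

lemma ex1_X_eq: "\<exists>!X. X_eq X"
  unfolding X_eq_iff_fixpoint
proof (rule fps_contraction_ex1_fixpoint)
  fix f g :: "rat fps"
  have "(1 + fps_X * (1 - f + 2 * f^2 - fps_X * f^3)) - (1 + fps_X * (1 - g + 2 * g^2 - fps_X * g^3))
      = fps_X * (f - g) * (2 * (f + g) - 1 - fps_X * (f^2 + f * g + g^2))"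
    by (simp add: algebra_simps power2_eq_square power3_eq_cube)
  then show "\<exists>q. (1 + fps_X * (1 - f + 2 * f^2 - fps_X * f^3))
      - (1 + fps_X * (1 - g + 2 * g^2 - fps_X * g^3)) = fps_X * (f - g) * q"
    by blast
qed

context
  fixes X :: "rat fps"
begin

definition series_C :: "rat fps" where
  "series_C = fps_X * X"

definition series_W :: "rat fps" where
  "series_W = inverse (1 - series_C)"

definition series_A :: "rat fps" where
  "series_A = (1 - series_C) * inverse (1 - series_C - fps_X)"

lemma series_C_nth_0 [simp]: "series_C $ 0 = 0"
  unfolding series_C_def by simp

lemma series_W_eq: "series_W = 1 + series_W * series_C"
  unfolding series_W_def by (rule fps_inverse_one_minus_eq) simp

lemma series_W_mult_one_minus_C: "series_W * (1 - series_C) = 1"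
  unfolding series_W_def by (simp add: inverse_mult_eq_1)

lemma series_A_eq: "series_A = 1 + fps_X * series_A * series_W"
proof -
  have A: "series_A * (1 - series_C - fps_X) = 1 - series_C"
    unfolding series_A_def by (simp add: mult.assoc inverse_mult_eq_1)
  have "series_A * (series_W * (1 - series_C)) - fps_X * series_A * series_W
      = series_W * (1 - series_C)"
    using arg_cong[OF A, of "\<lambda>t. t * series_W"] by (simp add: algebra_simps)
  then show ?thesis
    unfolding series_W_mult_one_minus_C by (simp add: algebra_simps)
qed

lemma series_A_nth_0: "series_A $ 0 = 1"
  by (subst series_A_eq) simp

lemma series_A_nth_Suc: "series_A $ Suc n = (series_A * series_W) $ n"
  by (subst series_A_eq) (simp add: mult.assoc)

text \<open>\<open>X_eq X\<close> says \<open>X (1 - C)\<^sup>2 = 1 - C + z\<close>; multiply by \<open>z W\<^sup>2\<close>.\<close>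
lemma series_C_eq:
  assumes "X_eq X"
  shows "series_C = fps_X * series_W + fps_X^2 * series_W^2"
proof -
  have "X * (1 - series_C)^2 - (1 - series_C + fps_X)
      = - (1 - X + fps_X - fps_X * X + 2 * fps_X * X^2 - fps_X^2 * X^3)"
    unfolding series_C_def by (simp add: algebra_simps power2_eq_square power3_eq_cube)
  then have X: "X * (1 - series_C)^2 = 1 - series_C + fps_X"
    using assms unfolding X_eq_def by simp
  have "series_C = fps_X * X * (series_W * (1 - series_C))^2"
    unfolding series_W_mult_one_minus_C by (simp add: series_C_def)
  also have "\<dots> = fps_X * series_W^2 * (X * (1 - series_C)^2)"
    by (simp add: power_mult_distrib mult_ac)
  also have "\<dots> = fps_X * series_W * (series_W * (1 - series_C)) + fps_X^2 * series_W^2"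
    unfolding X by (simp add: algebra_simps power2_eq_square)
  finally show ?thesis
    unfolding series_W_mult_one_minus_C by simp
qed

lemma series_A_mult_C_power_Suc:
  assumes "X_eq X"
  shows "series_A * series_C ^ Suc j
    = fps_X * ((series_A + fps_X * series_A * series_W^2) * series_C ^ j)
      + fps_X * (series_A * series_W * series_C ^ Suc j)"
proof -
  have "series_A * series_C ^ Suc j = series_A * series_C ^ j * series_C"
    by (simp add: mult.assoc)
  also have "\<dots> = series_A * series_C ^ j * (fps_X * series_W + fps_X^2 * series_W^2)"
    by (simp only: series_C_eq[OF assms, symmetric])
  also have "\<dots> = series_A * series_C ^ j * (fps_X * (1 + series_W * series_C) + fps_X^2 * series_W^2)"
    by (simp only: series_W_eq[symmetric])
  finally show ?thesis
    by (simp add: algebra_simps power2_eq_square)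
qed

text \<open>The closed form of \<open>refined_count (N + 2) M b\<close>.\<close>
definition closed_count :: "nat \<Rightarrow> nat \<Rightarrow> nat \<Rightarrow> rat" where
  "closed_count N M b =
    (if N < M then 0
     else if M \<le> b then (if b \<le> Suc N then (series_A * series_C ^ (N - M)) $ N else 0)
     else (fps_X * series_A * series_W * series_C ^ (N - Suc b)) $ N)"

lemma sum_closed_count_last:
  "(\<Sum>M0<min M (Suc c). closed_count N M0 M)
    = (if M \<le> Suc N then (series_A * series_W * series_C ^ (Suc N - min M (Suc c))) $ N else 0)"
proof (cases "M \<le> Suc N")
  case True
  have "(\<Sum>M0<min M (Suc c). closed_count N M0 M)
      = (\<Sum>M0<min M (Suc c). (series_A * series_C ^ (N - M0)) $ N)"
    using True by (intro sum.cong) (auto simp: closed_count_def)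
  also have "\<dots> = (series_A * series_W * series_C ^ (Suc N - min M (Suc c))) $ N"
    unfolding series_W_def using True by (intro fps_sum_mult_power_nth) auto
  finally show ?thesis
    using True by simp
next
  case False
  then show ?thesis
    by (auto intro!: sum.neutral simp: closed_count_def)
qed

lemma sum_closed_count_max:
  "(\<Sum>b\<le>M. closed_count N M b)
    = (if M \<le> N then ((series_A + fps_X * series_A * series_W^2) * series_C ^ (N - M)) $ N else 0)"
proof (cases "M \<le> N")
  case True
  have "(\<Sum>b<M. closed_count N M b) = (fps_X * series_A * series_W^2 * series_C ^ (N - M)) $ N"
  proof (cases N)
    case (Suc N')
    have "(\<Sum>b<M. closed_count N M b) = (\<Sum>b<M. (series_A * series_W * series_C ^ (N' - b)) $ N')"
      using True Suc by (intro sum.cong) (auto simp: closed_count_def mult.assoc)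
    also have "\<dots> = (series_A * series_W * series_W * series_C ^ (Suc N' - M)) $ N'"
      unfolding series_W_def using True Suc by (intro fps_sum_mult_power_nth) auto
    finally show ?thesis
      using Suc by (simp add: mult.assoc power2_eq_square)
  qed (use True in simp)
  moreover have "closed_count N M M = (series_A * series_C ^ (N - M)) $ N"
    using True by (simp add: closed_count_def)
  ultimately show ?thesis
    using True by (simp add: lessThan_Suc_atMost[symmetric] algebra_simps)
next
  case False
  then show ?thesis
    by (auto intro!: sum.neutral simp: closed_count_def)
qed

lemma closed_count_Suc:
  assumes "X_eq X"
  shows "closed_count (Suc N) M b = append_step (closed_count N) (Suc (Suc N)) M b"
proof -
  consider "Suc (Suc N) < b" | "b \<le> Suc (Suc N)" "Suc N < M"
    | "M \<le> Suc N" "M \<le> b" "b \<le> Suc (Suc N)" | "M \<le> Suc N" "b < M"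
    by linarith
  then show ?thesis
  proof cases
    case 1
    then show ?thesis
      by (simp add: closed_count_def append_step_def)
  next
    case 2
    then show ?thesis
      by (simp add: append_step_def sum_closed_count_last sum_closed_count_max)
         (simp add: closed_count_def)
  next
    case 3
    then have "min M (Suc b) = M"
      by simp
    with 3 sum_closed_count_last[where N = N and M = M and c = b]
    have "append_step (closed_count N) (Suc (Suc N)) M b
        = (if M \<le> N then ((series_A + fps_X * series_A * series_W^2) * series_C ^ (N - M)) $ N else 0)
          + (series_A * series_W * series_C ^ (Suc N - M)) $ N"
      by (simp add: append_step_def sum_closed_count_max)
    also have "\<dots> = (series_A * series_C ^ (Suc N - M)) $ Suc N"
    proof (cases "M \<le> N")
      case True
      then have "Suc N - M = Suc (N - M)"
        by simp
      then show ?thesis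
        using True series_A_mult_C_power_Suc[OF assms, of "N - M"] by simp
    next
      case False
      with 3 show ?thesis
        by (simp add: series_A_nth_Suc)
    qed
    finally show ?thesis
      using 3 by (simp add: closed_count_def)
  next
    case 4
    then have "min M (Suc b) = Suc b"
      by simp
    with 4 sum_closed_count_last[where N = N and M = M and c = b]
    have "append_step (closed_count N) (Suc (Suc N)) M b
        = (series_A * series_W * series_C ^ (N - b)) $ N"
      by (simp add: append_step_def)
    with 4 show ?thesis
      by (simp add: closed_count_def mult.assoc)
  qed
qed

lemma series_A_eq_fraction:
  assumes "X_eq X"
  shows "series_A = ((1 + fps_X) * (X - 1) - fps_X * (1 - fps_X) * X^2) / (fps_X * (1 + fps_X) * X)"
proof -
  let ?num = "(1 + fps_X) * (X - 1) - fps_X * (1 - fps_X) * X^2"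
  let ?den = "fps_X * (1 + fps_X) * X :: rat fps"
  let ?D = "1 - series_C - fps_X"
  have "X $ 0 = 1"
    using arg_cong[OF assms[unfolded X_eq_iff_fixpoint], of "\<lambda>f. f $ 0"] by simp
  then have "(1 + fps_X :: rat fps) \<noteq> 0" "X \<noteq> 0"
    by (auto dest: arg_cong[where f = "\<lambda>f. f $ 0"])
  then have "?den \<noteq> 0"
    by simp
  have "?num * ?D - (1 - series_C) * ?den
      = (fps_X - 1) * (1 - X + fps_X - fps_X * X + 2 * fps_X * X^2 - fps_X^2 * X^3)"
    unfolding series_C_def by (simp add: algebra_simps power2_eq_square power3_eq_cube)
  then have num: "?num * ?D = (1 - series_C) * ?den"
    using assms unfolding X_eq_def by simp
  have "?D * inverse ?D = 1"
    by (simp add: inverse_mult_eq_1')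
  then have "?num = ?num * ?D * inverse ?D"
    by (simp add: mult.assoc)
  also have "\<dots> = series_A * ?den"
    unfolding num series_A_def by (simp add: mult_ac)
  finally have "?num = series_A * ?den" .
  with \<open>?den \<noteq> 0\<close> show ?thesis
    by simp
qed

end

lemma refined_count_eq_closed_count:
  assumes "X_eq X"
  shows "of_nat (refined_count (Suc (Suc N)) M b) = closed_count X N M b"
proof (induction N arbitrary: M b)
  case 0
  show ?case
    by (cases "M = 0")
       (simp_all add: refined_count_Suc append_step_def refined_count_one[unfolded One_nat_def]
         closed_count_def series_A_nth_0)
next
  case (Suc N)
  then have "(\<lambda>M b. of_nat (refined_count (Suc (Suc N)) M b)) = closed_count X N"
    by blast
  then show ?case
    by (simp add: refined_count_Suc[of "Suc (Suc N)"] of_nat_append_step closed_count_Suc[OF assms])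
qed

lemma I_count_eq_series_A_nth:
  assumes "X_eq X"
  shows "of_nat (I_count n) = series_A X $ n"
proof (cases n)
  case 0
  then show ?thesis
    by (simp add: I_count_eq_card_avoiders avoiders_zero series_A_nth_0)
next
  case (Suc N)
  have "(of_nat (I_count n) :: rat) = (\<Sum>M<Suc N. closed_count X N M (Suc N))"
    unfolding Suc I_count_eq_card_avoiders
    by (simp add: card_avoiders_eq_sum_refined_count refined_count_eq_closed_count[OF assms])
  also have "\<dots> = (\<Sum>M<Suc N. (series_A X * series_C X ^ (N - M)) $ N)"
    by (intro sum.cong) (auto simp: closed_count_def)
  also have "\<dots> = (series_A X * series_W X) $ N"
    using fps_sum_mult_power_nth[of "series_C X" "Suc N" N "series_A X"]
    by (simp add: series_W_def)
  finally show ?thesis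
    using Suc by (simp add: series_A_nth_Suc)
qed

theorem mainTheorem7:
  shows "(\<exists>!X. X_eq X) \<and>
    (\<forall>X. X_eq X \<longrightarrow>
       Abs_fps (\<lambda>n. of_nat (I_count n) :: rat) =
       ((1 + fps_X) * (X - 1) - fps_X * (1 - fps_X) * X^2) / (fps_X * (1 + fps_X) * X))"
proof (intro conjI allI impI)
  show "\<exists>!X. X_eq X"
    by (rule ex1_X_eq)
next
  fix X
  assume "X_eq X"
  then have "Abs_fps (\<lambda>n. of_nat (I_count n) :: rat) = series_A X"
    by (simp add: fps_eq_iff I_count_eq_series_A_nth)
  with \<open>X_eq X\<close> show "Abs_fps (\<lambda>n. of_nat (I_count n) :: rat) =
      ((1 + fps_X) * (X - 1) - fps_X * (1 - fps_X) * X^2) / (fps_X * (1 + fps_X) * X)"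
    by (simp add: series_A_eq_fraction)
qed

end
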